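(* Let $\mathbb{K}$ be a field and let $A=(a_{ij})\in UU_n(\mathbb{K})$ (the group of $n\times n$ upper triangular unipotent matrices over $\mathbb{K}$) have all super-diagonal entries $a_{i,i+1}$ nonzero. If $B=(b_{ij})\in UU_n(\mathbb{K})$ commutes with $A$, then the first-row entries $b_{12},\dots,b_{1n}$ of $B$ determine all the remaining entries of $B$. If $\mathbb{K}=\mathbb{F}_q$ is a finite field with $q$ elements, then the centralizer of $A$ in $UU_n(\mathbb{F}_q)$ has cardinality $q^{n-1}$. *)

theory Defs
  imports "Jordan_Normal_Form.Matrix"
begin

text \<open>Indices are 0-based: entry a_{ij} of the paper is A $$ (i-1, j-1).
  UU n K: n x n upper triangular unipotent matrices over the field K.\<close>
definition UU :: "nat \<Rightarrow> 'a::field mat set" where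
  "UU n = {A \<in> carrier_mat n n. upper_triangular A \<and> (\<forall>i<n. A $$ (i,i) = 1)}"

end

theory Submission
  imports Defs "HOL-Library.FuncSet"
begin

(* Comparing the entries (i, j) of AB and BA expresses a_{i,i+1} b_{i+1,j} through entries
   of B in row i left of column j and entries in column j below row i + 1. As a_{i,i+1} <> 0,
   induction along the superdiagonals (and down the rows within one superdiagonal) shows that
   the first row of B determines B.

   Conversely, with N = A - 1 every matrix 1 + c_1 N + ... + c_{n-1} N^{n-1} commutes with A
   and lies in UU_n. Since N^k vanishes left of its k-th superdiagonal and has the nonzero entry
   a_{12} a_{23} ... a_{k,k+1} at position (1, k+1), the first row of such a matrix determines
   c_1, ..., c_{n-1} by forward substitution. So over F_q the first-row map embeds the
   centralizer into F_q^{n-1}, and the polynomials in N embed F_q^{n-1} into the centralizer. *)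

lemma index_mult_mat_sum:
  assumes "X \<in> carrier_mat n m" "Y \<in> carrier_mat m p" "i < n" "j < p"
  shows "(X * Y) $$ (i, j) = (\<Sum>k<m. X $$ (i, k) * Y $$ (k, j))"
  using assms by (simp add: scalar_prod_def atLeast0LessThan)

lemma UU_carrier_mat: "A \<in> UU n \<Longrightarrow> A \<in> carrier_mat n n"
  unfolding UU_def by simp

lemma UU_below_diag: "A \<in> UU n \<Longrightarrow> j < i \<Longrightarrow> i < n \<Longrightarrow> A $$ (i, j) = 0"
  unfolding UU_def upper_triangular_def by auto

lemma UU_diag: "A \<in> UU n \<Longrightarrow> i < n \<Longrightarrow> A $$ (i, i) = 1"
  unfolding UU_def by simp

definition strictly_upper_triangular :: "'a::zero mat \<Rightarrow> bool" where
  "strictly_upper_triangular N \<longleftrightarrow> (\<forall>i < dim_row N. \<forall>j \<le> i. N $$ (i, j) = 0)"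

lemma strictly_upper_triangular_pow_below:
  fixes N :: "'a::semiring_1 mat"
  assumes N: "N \<in> carrier_mat n n" "strictly_upper_triangular N"
    and "i < n" "j < n" "j < i + k"
  shows "(N ^\<^sub>m k) $$ (i, j) = 0"
  using assms(4,5)
proof (induction k arbitrary: j)
  case 0
  then show ?case using N \<open>i < n\<close> by simp
next
  case (Suc k)
  have "(N ^\<^sub>m Suc k) $$ (i, j) = (\<Sum>l<n. (N ^\<^sub>m k) $$ (i, l) * N $$ (l, j))"
    using index_mult_mat_sum[OF pow_carrier_mat[OF N(1)] N(1)] \<open>i < n\<close> Suc.prems by simp
  also have "\<dots> = 0"
  proof (rule sum.neutral, intro ballI)
    fix l assume "l \<in> {..<n}"
    then show "(N ^\<^sub>m k) $$ (i, l) * N $$ (l, j) = 0"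
    proof (cases "l < i + k")
      case True
      then show ?thesis using Suc.IH[of l] \<open>l \<in> {..<n}\<close> by simp
    next
      case False
      then have "N $$ (l, j) = 0"
        using N \<open>l \<in> {..<n}\<close> Suc.prems unfolding strictly_upper_triangular_def by simp
      then show ?thesis by simp
    qed
  qed
  finally show ?case .
qed

lemma strictly_upper_triangular_pow_superdiag:
  fixes N :: "'a::comm_semiring_1 mat"
  assumes N: "N \<in> carrier_mat n n" "strictly_upper_triangular N" and "i + k < n"
  shows "(N ^\<^sub>m k) $$ (i, i + k) = (\<Prod>l<k. N $$ (i + l, Suc (i + l)))"
  using assms(3)
proof (induction k)
  case 0
  then show ?case using N by simp
next
  case (Suc k)
  let ?f = "\<lambda>l. (N ^\<^sub>m k) $$ (i, l) * N $$ (l, Suc (i + k))"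
  have "(N ^\<^sub>m Suc k) $$ (i, i + Suc k) = (\<Sum>l<n. ?f l)"
    using index_mult_mat_sum[OF pow_carrier_mat[OF N(1)] N(1)] Suc.prems by simp
  also have "\<dots> = ?f (i + k)"
  proof -
    have "?f l = 0" if "l < n" "l \<noteq> i + k" for l
    proof (cases "l < i + k")
      case True
      then show ?thesis using strictly_upper_triangular_pow_below[OF N, of i l k] that Suc.prems by simp
    next
      case False
      then show ?thesis using N that unfolding strictly_upper_triangular_def by auto
    qed
    then have "sum ?f {i + k} = sum ?f {..<n}"
      using Suc.prems by (intro sum.mono_neutral_left) auto
    then show ?thesis by simp
  qed
  finally show ?case using Suc by simp
qed

lemma commute_pow_mat:
  fixes A N :: "'a::semiring_1 mat"
  assumes A: "A \<in> carrier_mat n n" and N: "N \<in> carrier_mat n n" and AN: "A * N = N * A"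
  shows "A * N ^\<^sub>m k = N ^\<^sub>m k * A"
proof (induction k)
  case 0
  then show ?case using A N by simp
next
  case (Suc k)
  have Nk: "N ^\<^sub>m k \<in> carrier_mat n n" using N by simp
  have "A * N ^\<^sub>m Suc k = (A * N ^\<^sub>m k) * N" using assoc_mult_mat[OF A Nk N] by simp
  also have "\<dots> = N ^\<^sub>m k * (A * N)" using Suc assoc_mult_mat[OF Nk A N] by simp
  also have "\<dots> = N ^\<^sub>m Suc k * A" using AN assoc_mult_mat[OF Nk N A] by simp
  finally show ?case .
qed

fun mat_poly :: "nat \<Rightarrow> (nat \<Rightarrow> 'a::comm_semiring_1) \<Rightarrow> 'a mat \<Rightarrow> nat \<Rightarrow> 'a mat" where
  "mat_poly n c N 0 = c 0 \<cdot>\<^sub>m 1\<^sub>m n"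
| "mat_poly n c N (Suc m) = mat_poly n c N m + c (Suc m) \<cdot>\<^sub>m N ^\<^sub>m Suc m"

lemma mat_poly_carrier_mat: "N \<in> carrier_mat n n \<Longrightarrow> mat_poly n c N m \<in> carrier_mat n n"
  by (induction m) auto

lemma index_mat_poly:
  assumes N: "N \<in> carrier_mat n n" and "i < n" "j < n"
  shows "mat_poly n c N m $$ (i, j) = (\<Sum>k\<le>m. c k * (N ^\<^sub>m k) $$ (i, j))"
proof (induction m)
  case 0
  then show ?case using assms by simp
next
  case (Suc m)
  then show ?case using assms mat_poly_carrier_mat[OF N, of c m] by simp
qed

lemma commute_mat_poly:
  fixes A N :: "'a::comm_semiring_1 mat"
  assumes A: "A \<in> carrier_mat n n" and N: "N \<in> carrier_mat n n" and AN: "A * N = N * A"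
  shows "A * mat_poly n c N m = mat_poly n c N m * A"
proof (induction m)
  case 0
  then show ?case using A mult_smult_distrib[OF A one_carrier_mat] mult_smult_assoc_mat[OF one_carrier_mat A] by simp
next
  case (Suc m)
  have P: "mat_poly n c N m \<in> carrier_mat n n" by (rule mat_poly_carrier_mat[OF N])
  have Nm: "N ^\<^sub>m Suc m \<in> carrier_mat n n" using N by (rule pow_carrier_mat)
  have "A * mat_poly n c N (Suc m) = A * mat_poly n c N m + c (Suc m) \<cdot>\<^sub>m (A * N ^\<^sub>m Suc m)"
    using mult_add_distrib_mat[OF A P smult_carrier_mat[OF Nm]] mult_smult_distrib[OF A Nm] by simp
  also have "\<dots> = mat_poly n c N m * A + c (Suc m) \<cdot>\<^sub>m (N ^\<^sub>m Suc m * A)"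
    using Suc commute_pow_mat[OF A N AN, of "Suc m"] by (simp del: pow_mat.simps)
  also have "\<dots> = mat_poly n c N (Suc m) * A"
    using add_mult_distrib_mat[OF P smult_carrier_mat[OF Nm] A] mult_smult_assoc_mat[OF Nm A] by simp
  finally show ?case .
qed

lemma mat_poly_UU:
  fixes N :: "'a::field mat"
  assumes N: "N \<in> carrier_mat n n" "strictly_upper_triangular N" and "c 0 = 1"
  shows "mat_poly n c N m \<in> UU n"
  unfolding UU_def upper_triangular_def
proof (intro CollectI conjI allI impI)
  show P: "mat_poly n c N m \<in> carrier_mat n n" by (rule mat_poly_carrier_mat[OF N(1)])
  fix i j assume "i < dim_row (mat_poly n c N m)" "j < i"
  then show "mat_poly n c N m $$ (i, j) = 0"
    using index_mat_poly[OF N(1)] strictly_upper_triangular_pow_below[OF N] P by simp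
next
  fix i assume i: "i < n"
  show "mat_poly n c N m $$ (i, i) = 1"
    using index_mat_poly[OF N(1) i i] strictly_upper_triangular_pow_below[OF N i i] \<open>c 0 = 1\<close> N(1) i
    by (simp add: sum.atMost_shift del: pow_mat.simps(2))
qed

lemma mat_poly_coeff_eq_if_first_row_eq:
  fixes N :: "'a::idom mat"
  assumes N: "N \<in> carrier_mat n n" "strictly_upper_triangular N"
    and superdiag: "\<And>l. Suc l < n \<Longrightarrow> N $$ (l, Suc l) \<noteq> 0"
    and "m < n"
    and row: "\<And>j. j < n \<Longrightarrow> mat_poly n c N m $$ (0, j) = mat_poly n d N m $$ (0, j)"
    and "k \<le> m"
  shows "c k = d k"
  using \<open>k \<le> m\<close>
proof (induction k rule: less_induct)
  case (less k)
  have k: "k < n" using less.prems \<open>m < n\<close> by simp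
  let ?f = "\<lambda>l. (c l - d l) * (N ^\<^sub>m l) $$ (0, k)"
  have "(\<Sum>l\<le>m. ?f l) = 0"
    using row[OF k] index_mat_poly[OF N(1) _ k] k by (simp add: algebra_simps sum_subtractf)
  moreover have "?f l = 0" if "l \<le> m" "l \<noteq> k" for l
    using less.IH[of l] strictly_upper_triangular_pow_below[OF N _ k, of 0 l] that k less.prems
    by (cases "l < k") auto
  then have "(\<Sum>l\<le>m. ?f l) = ?f k"
    using less.prems by (intro sum.mono_neutral_left[of _ "{k}", simplified, symmetric]) auto
  moreover have "(N ^\<^sub>m k) $$ (0, k) \<noteq> 0"
    using strictly_upper_triangular_pow_superdiag[OF N, of 0 k] superdiag k by simp
  ultimately show ?case by simp
qed

lemma UU_commute_entry:
  fixes A B :: "'a::field mat"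
  assumes A: "A \<in> UU n" and B: "B \<in> UU n" and AB: "A * B = B * A"
    and ij: "Suc i < j" "j < n" and ne: "A $$ (i, Suc i) \<noteq> 0"
  shows "B $$ (Suc i, j) = ((\<Sum>k<j. B $$ (i, k) * A $$ (k, j))
           - (\<Sum>k\<in>{Suc (Suc i)..<n}. A $$ (i, k) * B $$ (k, j))) / A $$ (i, Suc i)"
proof -
  note Ac = UU_carrier_mat[OF A] and Bc = UU_carrier_mat[OF B]
  let ?f = "\<lambda>k. A $$ (i, k) * B $$ (k, j)"
  let ?g = "\<lambda>k. B $$ (i, k) * A $$ (k, j)"
  have "(A * B) $$ (i, j) = sum ?f {..<i} + sum ?f {i..<n}"
    using index_mult_mat_sum[OF Ac Bc] ij by (simp add: lessThan_atLeast0 sum.atLeastLessThan_concat)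
  also have "sum ?f {..<i} = 0"
    using UU_below_diag[OF A] ij by (intro sum.neutral) auto
  also have "sum ?f {i..<n} = ?f i + ?f (Suc i) + sum ?f {Suc (Suc i)..<n}"
    using ij by (simp add: sum.atLeast_Suc_lessThan)
  finally have AB_entry: "(A * B) $$ (i, j) =
      B $$ (i, j) + A $$ (i, Suc i) * B $$ (Suc i, j) + sum ?f {Suc (Suc i)..<n}"
    using UU_diag[OF A] ij by simp
  have "(B * A) $$ (i, j) = sum ?g {..<j} + sum ?g {j..<n}"
    using index_mult_mat_sum[OF Bc Ac] ij by (simp add: lessThan_atLeast0 sum.atLeastLessThan_concat)
  also have "sum ?g {j..<n} = ?g j + sum ?g {Suc j..<n}"
    using ij by (simp add: sum.atLeast_Suc_lessThan)
  also have "sum ?g {Suc j..<n} = 0"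
    using UU_below_diag[OF A] ij by (intro sum.neutral) auto
  finally have BA_entry: "(B * A) $$ (i, j) = sum ?g {..<j} + B $$ (i, j)"
    using UU_diag[OF A] ij by simp
  show ?thesis
    using AB_entry BA_entry AB ne by (simp add: field_simps)
qed

lemma UU_centralizer_eq_if_first_row_eq:
  fixes A B B' :: "'a::field mat"
  assumes A: "A \<in> UU n" and superdiag: "\<And>i. Suc i < n \<Longrightarrow> A $$ (i, Suc i) \<noteq> 0"
    and B: "B \<in> UU n" "A * B = B * A" and B': "B' \<in> UU n" "A * B' = B' * A"
    and row: "\<And>j. 0 < j \<Longrightarrow> j < n \<Longrightarrow> B $$ (0, j) = B' $$ (0, j)"
  shows "B = B'"
proof -
  have lower: "B $$ (i, j) = B' $$ (i, j)" if "j \<le> i" "i < n" for i j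
    using that UU_below_diag[OF B(1)] UU_below_diag[OF B'(1)] UU_diag[OF B(1)] UU_diag[OF B'(1)]
    by (cases "j = i") auto
  have diagonal: "B $$ (r, r + d) = B' $$ (r, r + d)" if "r + d < n" for r d
    using that
  proof (induction d arbitrary: r rule: less_induct)
    case (less d)
    show ?case
      using less.prems
    proof (induction r)
      case 0
      then show ?case using row lower by (cases d) auto
    next
      case (Suc i)
      show ?case
      proof (cases "d = 0")
        case True
        then show ?thesis using lower Suc.prems by simp
      next
        case False
        define j where "j = Suc i + d"
        have ij: "Suc i < j" "j < n" using False Suc.prems unfolding j_def by auto
        have "B $$ (i, k) = B' $$ (i, k)" if "k < j" for k
        proof (cases "k < i")
          case True
          then show ?thesis using lower ij by simp
        next
          case False
          then have "k = i + (k - i)" "k - i \<le> d" using \<open>k < j\<close> unfolding j_def by auto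
          then show ?thesis
            using less.IH[of "k - i" i] Suc.IH \<open>k < j\<close> ij by (cases "k - i = d") auto
        qed
        moreover have "B $$ (k, j) = B' $$ (k, j)" if "Suc (Suc i) \<le> k" "k < n" for k
        proof (cases "j \<le> k")
          case True
          then show ?thesis using lower that by simp
        next
          case False
          then have "j = k + (j - k)" "j - k < d" using that unfolding j_def by auto
          then show ?thesis using less.IH[of "j - k" k] ij by simp
        qed
        ultimately have "B $$ (Suc i, j) = B' $$ (Suc i, j)"
          using UU_commute_entry[OF A B ij] UU_commute_entry[OF A B' ij] superdiag ij by simp
        then show ?thesis unfolding j_def by simp
      qed
    qed
  qed
  show ?thesis
  proof (rule eq_matI)
    fix i j assume "i < dim_row B'" "j < dim_col B'"
    then have "i < n" "j < n" using UU_carrier_mat[OF B'(1)] by auto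
    then show "B $$ (i, j) = B' $$ (i, j)"
      using lower diagonal[of i "j - i"] by (cases "j \<le> i") auto
  qed (use UU_carrier_mat[OF B(1)] UU_carrier_mat[OF B'(1)] in auto)
qed

lemma UU_minus_one_mat:
  fixes A :: "'a::field mat"
  assumes "A \<in> UU n"
  shows "A - 1\<^sub>m n \<in> carrier_mat n n" "strictly_upper_triangular (A - 1\<^sub>m n)"
    and "A * (A - 1\<^sub>m n) = (A - 1\<^sub>m n) * A"
proof -
  note Ac = UU_carrier_mat[OF assms]
  show "A - 1\<^sub>m n \<in> carrier_mat n n" using Ac by (simp add: minus_carrier_mat)
  show "strictly_upper_triangular (A - 1\<^sub>m n)"
    unfolding strictly_upper_triangular_def
    using Ac UU_below_diag[OF assms] UU_diag[OF assms] by (auto simp: le_less)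
  show "A * (A - 1\<^sub>m n) = (A - 1\<^sub>m n) * A"
    using mult_minus_distrib_mat[OF Ac Ac one_carrier_mat]
      minus_mult_distrib_mat[OF Ac one_carrier_mat Ac] Ac by simp
qed

lemma card_UU_centralizer:
  fixes A :: "'a::field mat"
  assumes A: "A \<in> UU n" and superdiag: "\<And>i. Suc i < n \<Longrightarrow> A $$ (i, Suc i) \<noteq> 0"
    and fin: "finite (UNIV :: 'a set)"
  shows "card {B \<in> UU n. A * B = B * A} = card (UNIV :: 'a set) ^ (n - 1)"
proof -
  define C where "C = {B \<in> UU n. A * B = B * A}"
  define R where "R = (\<Pi>\<^sub>E j\<in>{1..<n}. (UNIV :: 'a set))"
  define first_row where "first_row B = restrict (\<lambda>j. B $$ (0, j)) {1..<n}" for B :: "'a mat"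
  define N where "N = A - 1\<^sub>m n"
  define poly where "poly v = mat_poly n (v(0 := 1)) N (n - 1)" for v
  note Ac = UU_carrier_mat[OF A]
  have N: "N \<in> carrier_mat n n" "strictly_upper_triangular N" and AN: "A * N = N * A"
    unfolding N_def using UU_minus_one_mat[OF A] by auto
  have N_superdiag: "N $$ (l, Suc l) \<noteq> 0" if "Suc l < n" for l
    unfolding N_def using that Ac superdiag by simp
  have inj_first_row: "inj_on first_row C"
  proof (rule inj_onI)
    fix B B' assume BC: "B \<in> C" "B' \<in> C" and eq: "first_row B = first_row B'"
    have "B $$ (0, j) = B' $$ (0, j)" if "0 < j" "j < n" for j
      using fun_cong[OF eq, of j] that unfolding first_row_def by simp
    then show "B = B'"
      using UU_centralizer_eq_if_first_row_eq[OF A superdiag] BC unfolding C_def by blast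
  qed
  have first_row_R: "first_row ` C \<subseteq> R" unfolding R_def first_row_def by auto
  have finite_R: "finite R" unfolding R_def using fin by (intro finite_PiE) auto
  have "card C = card R"
  proof (rule card_bij_eq[OF inj_first_row first_row_R])
    show "inj_on poly R"
    proof (rule inj_onI)
      fix v w assume v: "v \<in> R" and w: "w \<in> R" and eq: "poly v = poly w"
      have coeff: "v k = w k" if k: "k \<in> {1..<n}" for k
        using mat_poly_coeff_eq_if_first_row_eq[OF N N_superdiag, of "n - 1" "v(0 := 1)" "w(0 := 1)" k]
          eq k unfolding poly_def by auto
      show "v = w" using PiE_ext[OF v[unfolded R_def] w[unfolded R_def]] coeff by blast
    qed
    show "poly ` R \<subseteq> C"
      unfolding poly_def C_def using mat_poly_UU[OF N] commute_mat_poly[OF Ac N(1) AN] by auto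
    show "finite C" using inj_on_finite[OF inj_first_row first_row_R finite_R] .
  qed (rule finite_R)
  moreover have "card R = card (UNIV :: 'a set) ^ (n - 1)" unfolding R_def by (simp add: card_PiE)
  ultimately show ?thesis unfolding C_def by simp
qed

theorem lemma11p2:
  fixes A :: "'a::field mat" and n :: nat
  assumes "A \<in> UU n"
    and "\<forall>i. i + 1 < n \<longrightarrow> A $$ (i, i + 1) \<noteq> 0"
  shows "(\<forall>B \<in> UU n. \<forall>B' \<in> UU n. A * B = B * A \<longrightarrow> A * B' = B' * A \<longrightarrow>
            (\<forall>j. 1 \<le> j \<and> j < n \<longrightarrow> B $$ (0, j) = B' $$ (0, j)) \<longrightarrow> B = B')
       \<and> (finite (UNIV :: 'a set) \<longrightarrow>
            card {B \<in> UU n. A * B = B * A} = card (UNIV :: 'a set) ^ (n - 1))"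
proof -
  have superdiag: "\<And>i. Suc i < n \<Longrightarrow> A $$ (i, Suc i) \<noteq> 0" using assms(2) by simp
  show ?thesis
    using UU_centralizer_eq_if_first_row_eq[OF assms(1) superdiag] card_UU_centralizer[OF assms(1) superdiag]
    by (auto simp: Suc_le_eq)
qed

end
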